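(* Let $p$ be a prime with $p\equiv 1\pmod 3$ and let $a$ be a positive integer. Then $$\sum_{k=1}^{\frac{2}{3}(p^a-1)}\binom{2k}{k}\equiv 0\pmod{p^2}.$$
   Context: Note that $\frac23(p^a-1)$ is a positive integer since $p^a\equiv1\pmod 3$. *)

theory Defs
  imports "HOL-Number_Theory.Number_Theory"
begin

end

theory Submission
  imports Defs "HOL-Computational_Algebra.Formal_Power_Series"
begin

text \<open>Let \<open>L a M\<close> be the coefficient of \<open>x^M\<close> in \<open>(1 + x)^a / (1 + x + x^2)\<close> for integer \<open>a\<close>,
  and \<open>S m = \<Sum>k\<le>m. C(2k, k)\<close>. Pascal-type recurrences give \<open>L (2m + 2) m = S m\<close> and
  \<open>2 L (2m + 1) m = S m + 1\<close>, a closed form of \<open>L K M\<close> for \<open>0 \<le> K \<le> M + 1\<close>, and the reflection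
  \<open>L (-K) M = (-1)^M L (K + M + 1) M\<close>. For \<open>n = p^a = 6r + 1\<close> and \<open>m = 4r\<close> we have
  \<open>2n - m = 2m + 2\<close> and \<open>n - m = 2r + 1\<close>. Factoring \<open>(1 + x)^(2n - m) = (1 + x)^(2n) (1 + x)^(-m)\<close>,
  and likewise for \<open>n - m\<close>, the congruence \<open>C(2n, i) \<equiv> 2 C(n, i) (mod p^2)\<close> for \<open>0 < i < n\<close>
  gives \<open>L (2n - m) m + L (-m) m \<equiv> 2 L (n - m) m\<close>. The three terms are \<open>S m\<close>, \<open>(S m + 1)/2\<close>
  and \<open>1\<close>, hence \<open>3 (S m - 1) \<equiv> 0 (mod p^2)\<close>.\<close>

unbundle fps_syntax

definition chi3 :: "int \<Rightarrow> int" where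
  "chi3 x = (if x mod 3 = 1 then 1 else if x mod 3 = 2 then -1 else 0)"

lemma chi3_simps [simp]: "chi3 1 = 1" "chi3 2 = -1"
  by (simp_all add: chi3_def)

lemma chi3_consecutive_sum: "chi3 x + chi3 (x + 1) + chi3 (x + 2) = 0"
  unfolding chi3_def by presburger

lemma chi3_double: "chi3 (2 * x) = - chi3 x"
  unfolding chi3_def by presburger

text \<open>This is \<open>a gchoose k\<close> on \<open>int\<close> (cf. \<open>gbinomial_int_binomial\<close>), which cannot be written
  once \<open>Binomial_Plus\<close> has restored the \<open>field_char_0\<close> sort constraint of \<open>gchoose\<close>.\<close>

definition int_gchoose :: "int \<Rightarrow> nat \<Rightarrow> int" where
  "int_gchoose a k = (if 0 \<le> a then int (nat a choose k)
     else (-1) ^ k * int ((k + nat (- a) - 1) choose k))"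

lemma of_int_int_gchoose: "of_int (int_gchoose a k) = (of_int a :: 'a :: field_char_0) gchoose k"
proof (cases "0 \<le> a")
  case True
  then obtain n where "a = int n"
    using nonneg_int_cases by blast
  then show ?thesis
    by (simp add: int_gchoose_def binomial_gbinomial)
next
  case False
  define n where "n = nat (- a)"
  have n: "a = - int n" "n > 0"
    using False by (auto simp: n_def)
  have "(of_int (int_gchoose a k) :: 'a) = (-1) ^ k * of_nat ((k + n - 1) choose k)"
    using n by (simp add: int_gchoose_def)
  also have "\<dots> = (-1) ^ k * ((of_nat n + of_nat k - 1) gchoose k)"
    using n by (simp add: binomial_gbinomial algebra_simps)
  also have "\<dots> = (- of_nat n) gchoose k"
    by (simp add: gbinomial_minus)
  finally show ?thesis
    using n by simp
qed

lemma int_gchoose_of_nat [simp]: "int_gchoose (int n) k = int (n choose k)"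
  by (simp add: int_gchoose_def)

definition int_binomial_fps :: "int \<Rightarrow> int fps" where
  "int_binomial_fps a = Abs_fps (int_gchoose a)"

lemma int_binomial_fps_nth [simp]: "int_binomial_fps a $ k = int_gchoose a k"
  by (simp add: int_binomial_fps_def)

lemma int_binomial_fps_add: "int_binomial_fps (a + b) = int_binomial_fps a * int_binomial_fps b"
proof (rule fps_ext)
  fix n
  have "(of_int (int_gchoose (a + b) n) :: rat) = (of_int a + of_int b) gchoose n"
    by (simp add: of_int_int_gchoose)
  also have "\<dots> = (\<Sum>k=0..n. (of_int a gchoose k) * (of_int b gchoose (n - k)))"
    by (rule gbinomial_Vandermonde [symmetric])
  also have "\<dots> = of_int (\<Sum>k=0..n. int_gchoose a k * int_gchoose b (n - k))"
    by (simp add: of_int_int_gchoose)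
  finally show "int_binomial_fps (a + b) $ n = (int_binomial_fps a * int_binomial_fps b) $ n"
    by (simp only: of_int_eq_iff fps_mult_nth int_binomial_fps_nth)
qed

lemma int_binomial_fps_1: "int_binomial_fps 1 = 1 + fps_X"
proof (rule fps_ext)
  fix n :: nat
  show "int_binomial_fps 1 $ n = (1 + fps_X) $ n"
    by (cases n) (simp_all add: int_gchoose_def)
qed

definition chi3_fps :: "int fps" where
  "chi3_fps = Abs_fps (\<lambda>j. chi3 (int j + 1))"

lemma chi3_fps_inverse: "(1 + fps_X + fps_X\<^sup>2) * chi3_fps = 1"
proof (rule fps_ext)
  fix n :: nat
  have "((1 + fps_X + fps_X\<^sup>2) * chi3_fps) $ n
      = chi3 (int n + 1) + (if n = 0 then 0 else chi3 (int n))
        + (if n \<le> 1 then 0 else chi3 (int n - 1))"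
    by (auto simp: chi3_fps_def distrib_right fps_X_power_mult_nth le_Suc_eq)
  also have "\<dots> = (if n = 0 then 1 else 0)"
    using chi3_consecutive_sum [of "int n - 1"] by (auto simp: le_Suc_eq algebra_simps)
  finally show "((1 + fps_X + fps_X\<^sup>2) * chi3_fps) $ n = 1 $ n"
    by simp
qed

text \<open>\<open>binom_chi3 a M\<close> is \<open>L a M\<close>, by \<open>chi3_fps_inverse\<close>.\<close>

definition binom_chi3 :: "int \<Rightarrow> nat \<Rightarrow> int" where
  "binom_chi3 a M = (int_binomial_fps a * chi3_fps) $ M"

lemma int_binomial_fps_0 [simp]: "int_binomial_fps 0 = 1"
  by (rule fps_ext) (simp add: int_gchoose_def)

lemma int_binomial_fps_plus_1: "int_binomial_fps (a + 1) = (1 + fps_X) * int_binomial_fps a"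
  by (simp add: int_binomial_fps_add int_binomial_fps_1 mult.commute)

lemma binom_chi3_0_left: "binom_chi3 0 M = chi3 (int M + 1)"
  by (simp add: binom_chi3_def chi3_fps_def)

lemma binom_chi3_0_right [simp]: "binom_chi3 a 0 = 1"
  by (simp add: binom_chi3_def chi3_fps_def int_gchoose_def)

lemma binom_chi3_pascal: "binom_chi3 (a + 1) (Suc M) = binom_chi3 a M + binom_chi3 a (Suc M)"
  by (simp add: binom_chi3_def int_binomial_fps_plus_1 mult.assoc distrib_right)

lemma binom_chi3_plus_2:
  "binom_chi3 (a + 2) (Suc M) = binom_chi3 a M + int_gchoose a (Suc M)"
proof -
  have "int_binomial_fps (a + 2) * chi3_fps
      = int_binomial_fps a * ((1 + fps_X + fps_X\<^sup>2) * chi3_fps)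
        + fps_X * (int_binomial_fps a * chi3_fps)"
    using int_binomial_fps_plus_1 [of "a + 1"] int_binomial_fps_plus_1 [of a]
    by (simp add: power2_eq_square algebra_simps)
  then show ?thesis
    by (simp add: binom_chi3_def chi3_fps_inverse)
qed

lemma binom_chi3_convolution:
  "binom_chi3 (a + b) M = (\<Sum>i\<le>M. int_gchoose a i * binom_chi3 b (M - i))"
  by (simp add: binom_chi3_def int_binomial_fps_add mult.assoc fps_mult_nth atLeast0AtMost)

lemma binom_chi3_of_nat:
  "K \<le> Suc M \<Longrightarrow> binom_chi3 (int K) M = (-1) ^ K * chi3 (int M + 1 + int K)"
proof (induction K arbitrary: M)
  case 0
  then show ?case
    by (simp add: binom_chi3_0_left)
next
  case (Suc K)
  show ?case
  proof (cases M)
    case 0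
    with Suc.prems show ?thesis
      by simp
  next
    case (Suc M')
    have "binom_chi3 (int (Suc K)) M = binom_chi3 (int K) M' + binom_chi3 (int K) (Suc M')"
      using binom_chi3_pascal [of "int K" M'] Suc by (simp add: add.commute)
    also have "\<dots> = (-1) ^ K * (chi3 (int M' + 1 + int K) + chi3 (int M' + 1 + int K + 1))"
      using Suc.IH [of M'] Suc.IH [of "Suc M'"] Suc.prems Suc by (simp add: algebra_simps)
    also have "\<dots> = (-1) ^ K * - chi3 (int M' + 1 + int K + 2)"
    proof -
      have "chi3 (int M' + 1 + int K) + chi3 (int M' + 1 + int K + 1) = - chi3 (int M' + 1 + int K + 2)"
        using chi3_consecutive_sum [of "int M' + 1 + int K"] by linarith
      then show ?thesis
        by (simp only:)
    qed
    also have "\<dots> = (-1) ^ Suc K * chi3 (int M + 1 + int (Suc K))"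
      using Suc by (simp add: algebra_simps)
    finally show ?thesis .
  qed
qed

lemma binom_chi3_neg:
  "binom_chi3 (- int K) M = (-1) ^ M * binom_chi3 (int (K + M + 1)) M"
proof (induction M arbitrary: K)
  case 0
  then show ?case
    by simp
next
  case (Suc M)
  note IH_M = Suc.IH
  show ?case
  proof (induction K)
    case 0
    have "binom_chi3 (int (0 + Suc M + 1)) (Suc M) = (-1) ^ M * chi3 (2 * (int M + 2))"
      using binom_chi3_of_nat [of "M + 2" "Suc M"] by (simp add: algebra_simps)
    then show ?case
      using chi3_double [of "int M + 2"] by (simp add: binom_chi3_0_left add.commute)
  next
    case (Suc K)
    have "binom_chi3 (- int (Suc K)) (Suc M)
        = binom_chi3 (- int K) (Suc M) - binom_chi3 (- int (Suc K)) M"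
      using binom_chi3_pascal [of "- int (Suc K)" M] by (simp add: algebra_simps)
    also have "\<dots> = (-1) ^ Suc M * (binom_chi3 (int (K + M + 2)) (Suc M) + binom_chi3 (int (K + M + 2)) M)"
      using Suc.IH IH_M [of "Suc K"] by (simp add: algebra_simps)
    also have "\<dots> = (-1) ^ Suc M * binom_chi3 (int (Suc K + Suc M + 1)) (Suc M)"
      using binom_chi3_pascal [of "int (K + M + 2)" M] by (simp add: algebra_simps)
    finally show ?case .
  qed
qed

lemma binom_chi3_central_even:
  "binom_chi3 (int (2 * m + 2)) m = (\<Sum>k\<le>m. int ((2 * k) choose k))"
proof (induction m)
  case 0
  then show ?case
    by simp
next
  case (Suc m)
  have "binom_chi3 (int (2 * m + 2) + 2) (Suc m)
      = binom_chi3 (int (2 * m + 2)) m + int ((2 * m + 2) choose Suc m)"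
    using binom_chi3_plus_2 [of "int (2 * m + 2)" m] by (simp only: int_gchoose_of_nat)
  then show ?case
    using Suc.IH by (simp add: add.commute del: binomial_Suc_Suc)
qed

lemma central_binomial_Suc: "(2 * Suc m) choose Suc m = 2 * ((2 * m + 1) choose Suc m)"
proof -
  have "(2 * m + 1) choose m = (2 * m + 1) choose Suc m"
    using central_binomial_odd [of "2 * m + 1"] by simp
  then show ?thesis
    by simp
qed

lemma binom_chi3_central_odd:
  "2 * binom_chi3 (int (2 * m + 1)) m = (\<Sum>k\<le>m. int ((2 * k) choose k)) + 1"
proof (induction m)
  case 0
  then show ?case
    by simp
next
  case (Suc m)
  have "binom_chi3 (int (2 * m + 1) + 2) (Suc m)
      = binom_chi3 (int (2 * m + 1)) m + int ((2 * m + 1) choose Suc m)"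
    using binom_chi3_plus_2 [of "int (2 * m + 1)" m] by (simp only: int_gchoose_of_nat)
  then show ?case
    using Suc.IH central_binomial_Suc [of m] by (simp add: add.commute del: binomial_Suc_Suc)
qed

lemma prime_dvd_choose_prime_power:
  fixes p :: nat
  assumes "prime p" and "0 < j" and "j < p ^ a"
  shows "p dvd (p ^ a choose j)"
proof (rule ccontr)
  assume "\<not> p dvd (p ^ a choose j)"
  then have "coprime (p ^ a) (p ^ a choose j)"
    using assms(1) by (simp add: prime_imp_coprime)
  moreover have "p ^ a dvd j * (p ^ a choose j)"
    using times_binomial_minus1_eq [OF assms(2), of "p ^ a"] by simp
  ultimately have "p ^ a dvd j"
    by (simp add: coprime_dvd_mult_left_iff)
  with assms(2,3) show False
    by (simp add: nat_dvd_not_less)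
qed

lemma choose_double_prime_power_cong:
  fixes p :: nat
  assumes "prime p" and "0 < i" and "i < p ^ a"
  shows "[(2 * p ^ a) choose i = 2 * (p ^ a choose i)] (mod p\<^sup>2)"
proof -
  define n where "n = p ^ a"
  obtain i' where i': "i = Suc i'"
    using assms(2) by (cases i) auto
  define R where "R = (\<Sum>k=1..i'. (n choose k) * (n choose (i - k)))"
  have "(2 * n) choose i = (\<Sum>k=0..i. (n choose k) * (n choose (i - k)))"
    using binomial_Vandermonde [of n n i] by (simp add: mult_2)
  also have "\<dots> = 2 * (n choose i) + R"
    by (simp add: R_def i' sum.atLeast0_atMost_Suc sum.atLeast_Suc_atMost)
  finally have "(2 * n) choose i = 2 * (n choose i) + R" .
  moreover have "p\<^sup>2 dvd R"
    unfolding R_def power2_eq_square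
  proof (rule dvd_sum)
    fix k assume "k \<in> {1..i'}"
    with i' assms show "p * p dvd (n choose k) * (n choose (i - k))"
      unfolding n_def by (intro mult_dvd_mono prime_dvd_choose_prime_power) auto
  qed
  ultimately show ?thesis
    unfolding n_def[symmetric] by (auto simp: cong_def)
qed

lemma binom_chi3_prime_power_cong:
  fixes p :: nat
  assumes "prime p" and "m < p ^ a"
  shows "[binom_chi3 (int (2 * p ^ a) - int m) m + binom_chi3 (- int m) m
          = 2 * binom_chi3 (int (p ^ a) - int m) m] (mod int (p\<^sup>2))"
proof -
  define c where "c i = binom_chi3 (- int m) (m - i)" for i
  have convolution: "binom_chi3 (int N - int m) m = (\<Sum>i\<le>m. int (N choose i) * c i)" for N
    using binom_chi3_convolution [of "int N" "- int m" m] by (simp add: c_def)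
  have "[int ((2 * p ^ a) choose i) * c i + (if i = 0 then c i else 0)
        = 2 * (int (p ^ a choose i) * c i)] (mod int (p\<^sup>2))" if "i \<le> m" for i
  proof (cases "i = 0")
    case False
    with that assms have "[int ((2 * p ^ a) choose i) = 2 * int (p ^ a choose i)] (mod int (p\<^sup>2))"
      using choose_double_prime_power_cong [OF assms(1), of i a] by (simp flip: cong_int_iff)
    then have "[int ((2 * p ^ a) choose i) * c i = 2 * int (p ^ a choose i) * c i] (mod int (p\<^sup>2))"
      by (rule cong_scalar_right)
    with False show ?thesis
      by (simp add: mult.assoc)
  qed simp
  then have "[\<Sum>i\<le>m. int ((2 * p ^ a) choose i) * c i + (if i = 0 then c i else 0)
        = \<Sum>i\<le>m. 2 * (int (p ^ a choose i) * c i)] (mod int (p\<^sup>2))"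
    by (intro cong_sum) simp
  then show ?thesis
    unfolding convolution [of "2 * p ^ a"] convolution [of "p ^ a"]
    by (simp add: sum.distrib sum_distrib_left c_def)
qed

lemma central_binomial_sum_prime_power_cong3:
  fixes p :: nat
  assumes "prime p" and p_power: "p ^ a = 6 * r + 1"
  shows "[3 * (\<Sum>k\<le>4 * r. int ((2 * k) choose k)) = 3] (mod int (p\<^sup>2))"
proof -
  define m where "m = 4 * r"
  define S where "S = (\<Sum>k\<le>m. int ((2 * k) choose k))"
  have "int (2 * p ^ a) - int m = int (2 * m + 2)"
    by (simp add: p_power m_def)
  then have upper: "binom_chi3 (int (2 * p ^ a) - int m) m = S"
    unfolding S_def by (simp only: binom_chi3_central_even)
  have chi3_eq_2: "chi3 (3 * k + 2) = -1" for k
    by (simp add: chi3_def)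
  have "binom_chi3 (int (2 * r + 1)) m = (-1) ^ (2 * r + 1) * chi3 (int m + 1 + int (2 * r + 1))"
    by (rule binom_chi3_of_nat) (simp add: m_def)
  also have "int m + 1 + int (2 * r + 1) = 3 * (2 * int r) + 2"
    by (simp add: m_def)
  finally have "binom_chi3 (int (2 * r + 1)) m = 1"
    by (simp only: chi3_eq_2) simp
  moreover have "int (p ^ a) - int m = int (2 * r + 1)"
    by (simp add: p_power m_def)
  ultimately have middle: "binom_chi3 (int (p ^ a) - int m) m = 1"
    by (simp only:)
  have "even m"
    by (simp add: m_def)
  then have "binom_chi3 (- int m) m = binom_chi3 (int (2 * m + 1)) m"
    using binom_chi3_neg [of m m] by (simp flip: mult_2)
  then have lower: "2 * binom_chi3 (- int m) m = S + 1"
    unfolding S_def by (simp only: binom_chi3_central_odd)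
  have "m < p ^ a"
    by (simp add: p_power m_def)
  with assms(1) have "[binom_chi3 (int (2 * p ^ a) - int m) m + binom_chi3 (- int m) m
      = 2 * binom_chi3 (int (p ^ a) - int m) m] (mod int (p\<^sup>2))"
    by (rule binom_chi3_prime_power_cong)
  then have "[2 * (S + binom_chi3 (- int m) m) = 2 * (2 * 1)] (mod int (p\<^sup>2))"
    unfolding upper middle by (rule cong_scalar_left)
  then have "[3 * S + 1 = 3 + 1] (mod int (p\<^sup>2))"
    using lower by (simp add: distrib_left)
  then show ?thesis
    by (simp only: cong_add_rcancel S_def m_def)
qed

lemma central_binomial_sum_prime_power_cong:
  fixes p :: nat
  assumes "prime p" and p_power: "p ^ a = 6 * r + 1"
  shows "[(\<Sum>k\<le>4 * r. (2 * k) choose k) = 1] (mod p\<^sup>2)"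
proof (cases "r = 0")
  case True
  then show ?thesis
    by simp
next
  case False
  then have "a \<noteq> 0"
    using p_power by (metis add_cancel_right_left mult_is_0 power_0 zero_neq_numeral)
  moreover have "\<not> 3 dvd p ^ a"
    using p_power by presburger
  ultimately have "p \<noteq> 3"
    by (metis dvd_power gr0I)
  with assms(1) have "coprime 3 p"
    by (simp add: primes_coprime)
  then have "coprime (int 3) (int (p\<^sup>2))"
    by (simp only: coprime_int_iff coprime_power_right_iff) simp
  with central_binomial_sum_prime_power_cong3 [OF assms] have "[(\<Sum>k\<le>4 * r. int ((2 * k) choose k)) = 1] (mod int (p\<^sup>2))"
    using cong_mult_lcancel [of 3 "int (p\<^sup>2)" _ 1] by simp
  then show ?thesis
    by (simp flip: cong_int_iff)
qed

theorem theorem1p2: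
  fixes p a :: nat
  assumes "prime p" and "[p = 1] (mod 3)" and "a > 0"
  shows "[(\<Sum>k = 1..2 * (p ^ a - 1) div 3. (2 * k) choose k) = 0] (mod p\<^sup>2)"
proof -
  have "p \<noteq> 2"
    using assms(2) by (auto simp: cong_def)
  then have "odd p"
    using prime_ge_2_nat [OF assms(1)] by (intro prime_odd_nat assms(1)) simp
  with assms(2) have "[p = 1] (mod 6)"
    unfolding cong_def by presburger
  then have "p ^ a mod 6 = 1"
    using cong_pow [of p 1 6 a] by (simp add: cong_def)
  then obtain r where r: "p ^ a = 6 * r + 1"
    using div_mult_mod_eq [of "p ^ a" 6] by (metis mult.commute)
  have "[1 + (\<Sum>k = 1..4 * r. (2 * k) choose k) = 1 + 0] (mod p\<^sup>2)"
    using central_binomial_sum_prime_power_cong [OF assms(1) r]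
    by (simp add: atMost_atLeast0 sum.atLeast_Suc_atMost)
  moreover have "2 * (p ^ a - 1) div 3 = 4 * r"
    by (simp add: r)
  ultimately show ?thesis
    by (simp only: cong_add_lcancel_nat)
qed

end
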